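(* Let $A$ and $\Lambda$ be as in the context and suppose $A^TA$ is singular. Let $d\ge 1$, $Q\in\mathbb R^{(m+1)\times d}$ (the matrix whose rows are the data points $\mathbf Q_0,\dots,\mathbf Q_m$), and let $P^{(0)}\in\mathbb R^{(n+1)\times d}$ be arbitrary. Define the sequence $$P^{(k+1)}=(I-\Lambda A^TA)P^{(k)}+\Lambda A^TQ,\qquad k=0,1,2,\dots,$$ where $I$ is the $(n+1)\times(n+1)$ identity. Then the sequence $(P^{(k)})_{k\ge 0}$ converges.
   Context: Let $n \le m$ be nonnegative integers. Let $B_0,\dots,B_n$ be real-valued basis functions (e.g. B-spline basis functions, tensor-product B-spline basis functions, or T-spline blending functions) that are nonnegative and form a partition of unity, i.e. $B_i(\mathbf t)\ge 0$ and $\sum_{i=0}^n B_i(\mathbf t)=1$ for every parameter $\mathbf t$. Let $\mathbf t_0,\dots,\mathbf t_m$ be parameter values assigned to data points $\mathbf Q_0,\dots,\mathbf Q_m$, and assume that for every $i$ there is some $j$ with $B_i(\mathbf t_j)\neq 0$. Let $A$ be the $(m+1)\times(n+1)$ matrix with entries $A_{ji}=B_i(\mathbf t_j)$. Let $\Lambda=\mathrm{diag}\big(1/\sum_{j=0}^m B_0(\mathbf t_j),\dots,1/\sum_{j=0}^m B_n(\mathbf t_j)\big)$, a diagonal matrix with positive diagonal entries. (This iteration is the LSPIA iteration for least-squares fitting.) *)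

theory Defs
  imports Complex_Main "Jordan_Normal_Form.Determinant"
begin

text \<open>Entrywise convergence of a sequence of r x c real matrices
  (equivalent to convergence in any norm on the finite-dimensional matrix space).\<close>
definition mat_seq_convergent :: "nat \<Rightarrow> nat \<Rightarrow> (nat \<Rightarrow> real mat) \<Rightarrow> bool" where
  "mat_seq_convergent r c P \<longleftrightarrow>
     (\<exists>L \<in> carrier_mat r c. \<forall>i<r. \<forall>j<c. (\<lambda>k. P k $$ (i, j)) \<longlonglongrightarrow> L $$ (i, j))"

end

theory Submission
  imports Defs
begin

text \<open>Write \<open>K = \<Lambda> A\<^sup>T A\<close> and \<open>T = I - K\<close>, and use the inner product
  \<open>\<langle>x, y\<rangle> = x\<^sup>T \<Lambda>\<^sup>-\<^sup>1 y\<close>, for which both are self-adjoint. Then \<open>\<langle>x, K x\<rangle> = |A x|\<^sup>2 \<ge> 0\<close>,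
  and \<open>|A x|\<^sup>2 \<le> \<langle>x, x\<rangle>\<close> by Jensen's inequality, because each \<open>(A x)\<^sub>j\<close> is a convex
  combination of the coordinates of \<open>x\<close> (partition of unity). So \<open>0 \<le> T \<le> I\<close>; hence the
  moments \<open>c j = \<langle>e, T\<^sup>j e\<rangle>\<close> are nonnegative and decreasing, thus convergent, and
  \<open>|T\<^sup>k e - T\<^sup>l e|\<^sup>2 = c (2k) - 2 c (k + l) + c (2l)\<close> shows that \<open>T\<^sup>k e\<close> is a Cauchy sequence.
  The normal equations \<open>K x = \<Lambda> A\<^sup>T Q\<close> are always solvable, and for a solution \<open>x\<close> the
  error \<open>P k - x\<close> equals \<open>T\<^sup>k (P 0 - x)\<close>, so every column of \<open>P k\<close> converges.\<close>

lemma convergent_of_moment_bound: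
  fixes y c :: "nat \<Rightarrow> real"
  assumes "convergent c" and "s > 0"
    and bound: "\<And>k l. s * (y k - y l)^2 \<le> c (k + k) - 2 * c (k + l) + c (l + l)"
  shows "convergent y"
  unfolding Cauchy_convergent_iff [symmetric]
proof (rule CauchyI)
  fix \<epsilon> :: real assume "\<epsilon> > 0"
  obtain L where L: "c \<longlonglongrightarrow> L" using \<open>convergent c\<close> by (auto simp: convergent_def)
  define \<delta> where "\<delta> = \<epsilon>^2 * s / 4"
  have "\<delta> > 0" using \<open>\<epsilon> > 0\<close> \<open>s > 0\<close> by (simp add: \<delta>_def)
  then obtain M where M: "\<And>j. j \<ge> M \<Longrightarrow> \<bar>c j - L\<bar> < \<delta>"
    using L unfolding LIMSEQ_iff real_norm_def by blast
  show "\<exists>M. \<forall>k\<ge>M. \<forall>l\<ge>M. norm (y k - y l) < \<epsilon>"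
  proof (intro exI allI impI)
    fix k l assume "M \<le> k" "M \<le> l"
    then have "c (k + k) - 2 * c (k + l) + c (l + l) < 4 * \<delta>"
      using M[of "k + k"] M[of "k + l"] M[of "l + l"] unfolding abs_less_iff by linarith
    then have "s * (y k - y l)^2 < \<epsilon>^2 * s"
      using bound[of k l] by (simp add: \<delta>_def)
    then have "\<bar>y k - y l\<bar>^2 < \<epsilon>^2"
      using \<open>s > 0\<close> by (simp add: mult.commute[of s])
    then show "norm (y k - y l) < \<epsilon>"
      using power2_less_imp_less[of "\<bar>y k - y l\<bar>" \<epsilon>] \<open>\<epsilon> > 0\<close> by simp
  qed
qed

lemma exists_linear_relation:
  fixes u :: "nat \<Rightarrow> nat \<Rightarrow> real"
  shows "\<exists>c. (\<exists>i\<le>N. c i \<noteq> 0) \<and> (\<forall>r<N. (\<Sum>i\<le>N. c i * u i r) = 0)"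
proof -
  define V where "V = mat (Suc N) (Suc N) (\<lambda>(r, i). if r < N then u i r else 0)"
  have V: "V \<in> carrier_mat (Suc N) (Suc N)" unfolding V_def by auto
  have "multrow N 0 V = V"
    unfolding mat_multrow_def V_def by (rule eq_matI) auto
  then have "det V = 0" using det_multrow[OF _ V, of N 0] by simp
  then obtain v where v: "v \<in> carrier_vec (Suc N)" "v \<noteq> 0\<^sub>v (Suc N)" "V *\<^sub>v v = 0\<^sub>v (Suc N)"
    using det_0_iff_vec_prod_zero_field[OF V] by auto
  have "\<exists>i\<le>N. v $ i \<noteq> 0"
  proof (rule ccontr)
    assume "\<not> ?thesis"
    then have "v = 0\<^sub>v (Suc N)" using v(1) by (intro eq_vecI) auto
    then show False using v(2) by simp
  qed
  moreover have "(\<Sum>i\<le>N. v $ i * u i r) = 0" if "r < N" for r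
  proof -
    have "(V *\<^sub>v v) $ r = (\<Sum>i<Suc N. u i r * v $ i)"
      using that v(1) V unfolding V_def by (simp add: scalar_prod_def row_def atLeast0LessThan)
    then show ?thesis using v(3) that lessThan_Suc_atMost by (simp add: mult.commute)
  qed
  ultimately show ?thesis by blast
qed

lemma mat_seq_convergentI:
  assumes "\<And>i j. i < r \<Longrightarrow> j < c \<Longrightarrow> convergent (\<lambda>k. P k $$ (i, j))"
  shows "mat_seq_convergent r c P"
  unfolding mat_seq_convergent_def
proof (intro bexI allI impI)
  show "mat r c (\<lambda>(i, j). lim (\<lambda>k. P k $$ (i, j))) \<in> carrier_mat r c" by simp
  fix i j assume "i < r" "j < c"
  then show "(\<lambda>k. P k $$ (i, j)) \<longlonglongrightarrow> mat r c (\<lambda>(i, j). lim (\<lambda>k. P k $$ (i, j))) $$ (i, j)"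
    using assms[of i j] by (simp add: convergent_LIMSEQ_iff)
qed

lemma sum_atMost_drop_leading_zeros:
  fixes c :: "nat \<Rightarrow> 'a::comm_semiring_0"
  assumes "a \<le> N" and "\<And>i. i < a \<Longrightarrow> c i = 0"
  shows "(\<Sum>i\<le>N. c i * f i) = (\<Sum>j\<le>N - a. c (a + j) * f (a + j))"
proof -
  have "(\<Sum>i\<le>N. c i * f i) = (\<Sum>i\<in>{0 + a..(N - a) + a}. c i * f i)"
    using assms by (intro sum.mono_neutral_right) auto
  also have "\<dots> = (\<Sum>j\<le>N - a. c (a + j) * f (a + j))"
    unfolding sum.shift_bounds_cl_nat_ivl by (simp add: atLeast0AtMost add.commute)
  finally show ?thesis .
qed

text \<open>Vectors are functions \<open>nat \<Rightarrow> real\<close> of which only the coordinates \<open>0, \<dots>, n\<close>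
  matter; \<open>kernel_apply n L\<close> multiplies them by the matrix with entries \<open>L r i\<close>.\<close>

definition kernel_apply :: "nat \<Rightarrow> (nat \<Rightarrow> nat \<Rightarrow> real) \<Rightarrow> (nat \<Rightarrow> real) \<Rightarrow> nat \<Rightarrow> real" where
  "kernel_apply n L x = (\<lambda>r. \<Sum>i\<le>n. L r i * x i)"

lemma kernel_apply_sum:
  "kernel_apply n L (\<lambda>r. \<Sum>k\<in>I. c k * f k r) = (\<lambda>r. \<Sum>k\<in>I. c k * kernel_apply n L (f k) r)"
  unfolding kernel_apply_def by (rule ext) (simp add: sum_distrib_left sum.swap[of _ I] mult_ac)

lemma kernel_apply_funpow_sum:
  "(kernel_apply n L ^^ a) (\<lambda>r. \<Sum>k\<in>I. c k * f k r)
     = (\<lambda>r. \<Sum>k\<in>I. c k * (kernel_apply n L ^^ a) (f k) r)"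
  by (induction a) (simp_all add: kernel_apply_sum)

lemma kernel_apply_add:
  "kernel_apply n L (\<lambda>r. x r + y r) = (\<lambda>r. kernel_apply n L x r + kernel_apply n L y r)"
  unfolding kernel_apply_def by (rule ext) (simp add: sum.distrib algebra_simps)

lemma kernel_apply_diff:
  "kernel_apply n L (\<lambda>r. x r - y r) = (\<lambda>r. kernel_apply n L x r - kernel_apply n L y r)"
  unfolding kernel_apply_def by (rule ext) (simp add: sum_subtractf algebra_simps)

lemma kernel_apply_scale:
  "kernel_apply n L (\<lambda>r. a * x r) = (\<lambda>r. a * kernel_apply n L x r)"
  unfolding kernel_apply_def by (rule ext) (simp add: sum_distrib_left algebra_simps)

lemma kernel_apply_cong:
  "(\<And>i. i \<le> n \<Longrightarrow> x i = y i) \<Longrightarrow> kernel_apply n L x = kernel_apply n L y"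
  unfolding kernel_apply_def by simp

text \<open>The \<open>n + 2\<close> vectors \<open>g, K g, \<dots>, K\<^sup>n\<^sup>+\<^sup>1 g\<close> are linearly dependent; factor the
  lowest power \<open>K\<^sup>a\<close> with a nonzero coefficient out of the relation.\<close>

lemma krylov_annihilator:
  fixes n :: nat and L :: "nat \<Rightarrow> nat \<Rightarrow> real" and g :: "nat \<Rightarrow> real"
  defines "K \<equiv> kernel_apply n L"
  assumes L_out: "\<And>r i. n < r \<Longrightarrow> L r i = 0" and g_out: "\<And>r. n < r \<Longrightarrow> g r = 0"
  shows "\<exists>c a w. c \<noteq> 0 \<and> (K ^^ a) (\<lambda>r. c * g r + K w r) = (\<lambda>r. 0)"
proof -
  obtain c i\<^sub>0 where i\<^sub>0: "i\<^sub>0 \<le> Suc n" "c i\<^sub>0 \<noteq> 0"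
    and c_rel: "\<forall>r<Suc n. (\<Sum>i\<le>Suc n. c i * (K ^^ i) g r) = 0"
    using exists_linear_relation[of "Suc n" "\<lambda>i r. (K ^^ i) g r"] by blast
  define a where "a = (LEAST i. c i \<noteq> 0)"
  have a: "a \<le> Suc n" "c a \<noteq> 0"
    using i\<^sub>0 Least_le[of "\<lambda>i. c i \<noteq> 0" i\<^sub>0] LeastI[of "\<lambda>i. c i \<noteq> 0" i\<^sub>0]
    unfolding a_def by simp_all
  have below_a: "c i = 0" if "i < a" for i
    using not_less_Least[of i "\<lambda>i. c i \<noteq> 0"] that unfolding a_def by blast
  define N where "N = Suc n - a"
  define w where "w = (\<lambda>r. \<Sum>j<N. c (a + Suc j) * (K ^^ j) g r)"
  have "(\<lambda>r. \<Sum>i\<le>Suc n. c i * (K ^^ i) g r) = (\<lambda>r. 0)"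
  proof
    fix r
    show "(\<Sum>i\<le>Suc n. c i * (K ^^ i) g r) = 0"
    proof (cases "r < Suc n")
      case False
      then have "(K ^^ i) g r = 0" for i
        by (cases i) (auto simp: K_def kernel_apply_def L_out g_out)
      then show ?thesis by simp
    qed (use c_rel in simp)
  qed
  moreover have "(\<Sum>i\<le>Suc n. c i * (K ^^ i) g r) = (\<Sum>j\<le>N. c (a + j) * (K ^^ (a + j)) g r)" for r
    unfolding N_def using a(1) below_a by (rule sum_atMost_drop_leading_zeros)
  moreover have "(\<lambda>r. \<Sum>j\<le>N. c (a + j) * (K ^^ (a + j)) g r) = (K ^^ a) (\<lambda>r. c a * g r + K w r)"
  proof -
    have "(\<lambda>r. c a * g r + K w r) = (\<lambda>r. \<Sum>j\<le>N. c (a + j) * (K ^^ j) g r)"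
      unfolding w_def K_def kernel_apply_sum by (simp add: sum.atMost_shift)
    then show ?thesis
      by (simp add: kernel_apply_funpow_sum K_def funpow_add)
  qed
  ultimately have "(K ^^ a) (\<lambda>r. c a * g r + K w r) = (\<lambda>r. 0)" by simp
  then show ?thesis using a(2) by blast
qed

locale lspia =
  fixes n m :: nat and b :: "nat \<Rightarrow> nat \<Rightarrow> real"
  assumes b_nonneg: "\<And>j i. i \<le> n \<Longrightarrow> b j i \<ge> 0"
    and b_partition_of_unity: "\<And>j. (\<Sum>i\<le>n. b j i) = 1"
    and col_sum_pos: "\<And>i. i \<le> n \<Longrightarrow> (\<Sum>j\<le>m. b j i) > 0"
begin

text \<open>\<open>b j i\<close> is the entry \<open>A\<^sub>j\<^sub>i = B\<^sub>i(t\<^sub>j)\<close>, \<open>col_sum i\<close> is \<open>1 / \<Lambda>\<^sub>i\<^sub>i\<close>,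
  \<open>colloc x\<close> is \<open>A x\<close>, and \<open>K\<close>, \<open>T\<close>, \<open>normal_rhs q\<close> are \<open>\<Lambda> A\<^sup>T A\<close>, \<open>I - \<Lambda> A\<^sup>T A\<close>,
  \<open>\<Lambda> A\<^sup>T q\<close>.\<close>

definition col_sum :: "nat \<Rightarrow> real" where
  "col_sum i = (\<Sum>j\<le>m. b j i)"

definition normal_kernel :: "nat \<Rightarrow> nat \<Rightarrow> real" where
  "normal_kernel r i = (if r \<le> n then (\<Sum>j\<le>m. b j r * b j i) / col_sum r else 0)"

definition iteration_kernel :: "nat \<Rightarrow> nat \<Rightarrow> real" where
  "iteration_kernel r i = (if r = i \<and> r \<le> n then 1 else 0) - normal_kernel r i"

definition normal_rhs :: "(nat \<Rightarrow> real) \<Rightarrow> nat \<Rightarrow> real" where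
  "normal_rhs q i = (if i \<le> n then (\<Sum>j\<le>m. b j i * q j) / col_sum i else 0)"

definition colloc :: "(nat \<Rightarrow> real) \<Rightarrow> nat \<Rightarrow> real" where
  "colloc x j = (\<Sum>i\<le>n. b j i * x i)"

definition inner_w :: "(nat \<Rightarrow> real) \<Rightarrow> (nat \<Rightarrow> real) \<Rightarrow> real" where
  "inner_w x y = (\<Sum>i\<le>n. col_sum i * x i * y i)"

abbreviation K :: "(nat \<Rightarrow> real) \<Rightarrow> nat \<Rightarrow> real" where
  "K \<equiv> kernel_apply n normal_kernel"

abbreviation T :: "(nat \<Rightarrow> real) \<Rightarrow> nat \<Rightarrow> real" where
  "T \<equiv> kernel_apply n iteration_kernel"

lemma col_sum_gt_0: "i \<le> n \<Longrightarrow> col_sum i > 0"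
  using col_sum_pos unfolding col_sum_def by auto

lemma K_eq_0_outside: "n < r \<Longrightarrow> K x r = 0"
  unfolding kernel_apply_def normal_kernel_def by simp

lemma T_eq_diff_K:
  assumes "r \<le> n" shows "T x r = x r - K x r"
proof -
  have "T x r = (\<Sum>i\<le>n. (if r = i then x i else 0) - normal_kernel r i * x i)"
    unfolding kernel_apply_def iteration_kernel_def using assms
    by (intro sum.cong) (auto simp: left_diff_distrib)
  then show ?thesis using assms by (simp add: sum_subtractf kernel_apply_def)
qed

lemma inner_w_commute: "inner_w x y = inner_w y x"
  unfolding inner_w_def by (simp add: mult_ac)

lemma inner_w_diff_left: "inner_w (\<lambda>r. x r - y r) z = inner_w x z - inner_w y z"
  unfolding inner_w_def by (simp add: sum_subtractf algebra_simps)

lemma inner_w_diff_right: "inner_w z (\<lambda>r. x r - y r) = inner_w z x - inner_w z y"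
  unfolding inner_w_def by (simp add: sum_subtractf algebra_simps)

lemma inner_w_add_left: "inner_w (\<lambda>r. x r + y r) z = inner_w x z + inner_w y z"
  unfolding inner_w_def by (simp add: sum.distrib algebra_simps)

lemma inner_w_scale_left: "inner_w (\<lambda>r. a * x r) z = a * inner_w x z"
  unfolding inner_w_def by (simp add: sum_distrib_left algebra_simps)

lemma inner_w_zero_right: "inner_w x (\<lambda>r. 0) = 0"
  unfolding inner_w_def by simp

lemma inner_w_self: "inner_w x x = (\<Sum>i\<le>n. col_sum i * (x i)^2)"
  unfolding inner_w_def by (simp add: power2_eq_square mult.assoc)

lemma col_sum_mult_sq_nonneg: "i \<le> n \<Longrightarrow> 0 \<le> col_sum i * (x i)^2"
  using col_sum_gt_0[of i] by simp

lemma col_sum_mult_sq_le_inner_w: "i \<le> n \<Longrightarrow> col_sum i * (x i)^2 \<le> inner_w x x"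
  unfolding inner_w_self by (rule member_le_sum) (auto simp: col_sum_mult_sq_nonneg)

lemma inner_w_self_nonneg: "inner_w x x \<ge> 0"
  unfolding inner_w_self by (auto intro!: sum_nonneg simp: col_sum_mult_sq_nonneg)

lemma inner_w_self_eq_0: "inner_w x x = 0 \<Longrightarrow> i \<le> n \<Longrightarrow> x i = 0"
  using col_sum_mult_sq_le_inner_w[of i x] col_sum_gt_0[of i] by (simp add: mult_le_0_iff)

lemma inner_w_K: "inner_w x (K y) = (\<Sum>j\<le>m. colloc x j * colloc y j)"
proof -
  have "inner_w x (K y) = (\<Sum>i\<le>n. \<Sum>l\<le>n. \<Sum>j\<le>m. x i * y l * (b j i * b j l))"
    unfolding inner_w_def kernel_apply_def
  proof (rule sum.cong[OF refl])
    fix i assume "i \<in> {..n}"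
    then have "col_sum i * normal_kernel i l = (\<Sum>j\<le>m. b j i * b j l)" for l
      using col_sum_gt_0[of i] unfolding normal_kernel_def by simp
    then have "col_sum i * x i * (\<Sum>l\<le>n. normal_kernel i l * y l)
        = (\<Sum>l\<le>n. x i * y l * (\<Sum>j\<le>m. b j i * b j l))"
      by (simp add: sum_distrib_left mult_ac)
    then show "col_sum i * x i * (\<Sum>l\<le>n. normal_kernel i l * y l)
        = (\<Sum>l\<le>n. \<Sum>j\<le>m. x i * y l * (b j i * b j l))"
      by (simp add: sum_distrib_left)
  qed
  also have "\<dots> = (\<Sum>j\<le>m. \<Sum>i\<le>n. \<Sum>l\<le>n. x i * y l * (b j i * b j l))"
    by (simp add: sum.swap[of _ "{..m}"])
  also have "\<dots> = (\<Sum>j\<le>m. colloc x j * colloc y j)"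
    unfolding colloc_def by (simp add: sum_product mult_ac)
  finally show ?thesis .
qed

lemma K_self_adjoint: "inner_w (K x) y = inner_w x (K y)"
  by (simp add: inner_w_K inner_w_commute[of "K x"] mult.commute)

lemma inner_w_K_self: "inner_w x (K x) = (\<Sum>j\<le>m. (colloc x j)^2)"
  by (simp add: inner_w_K power2_eq_square)

lemma colloc_sq_le: "(colloc x j)^2 \<le> (\<Sum>i\<le>n. b j i * (x i)^2)"
proof -
  define \<mu> where "\<mu> = colloc x j"
  have "0 \<le> (\<Sum>i\<le>n. b j i * (x i - \<mu>)^2)"
    using b_nonneg by (auto intro!: sum_nonneg)
  also have "\<dots> = (\<Sum>i\<le>n. b j i * (x i)^2) - 2 * \<mu> * (\<Sum>i\<le>n. b j i * x i) + \<mu>^2 * (\<Sum>i\<le>n. b j i)"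
    by (simp add: power2_diff algebra_simps sum.distrib sum_subtractf sum_distrib_left sum_distrib_right)
  also have "\<dots> = (\<Sum>i\<le>n. b j i * (x i)^2) - \<mu>^2"
    using b_partition_of_unity[of j] unfolding \<mu>_def colloc_def by (simp add: power2_eq_square)
  finally show ?thesis unfolding \<mu>_def by simp
qed

lemma inner_w_K_self_le: "inner_w x (K x) \<le> inner_w x x"
proof -
  have "inner_w x (K x) \<le> (\<Sum>j\<le>m. \<Sum>i\<le>n. b j i * (x i)^2)"
    unfolding inner_w_K_self by (intro sum_mono colloc_sq_le)
  also have "\<dots> = (\<Sum>i\<le>n. (\<Sum>j\<le>m. b j i) * x i * x i)"
    by (subst sum.swap) (simp add: sum_distrib_right power2_eq_square mult.assoc)
  finally show ?thesis unfolding inner_w_def col_sum_def .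
qed

lemma inner_w_T: "inner_w x (T y) = inner_w x y - inner_w x (K y)"
proof -
  have "inner_w x (T y) = inner_w x (\<lambda>r. y r - K y r)"
    unfolding inner_w_def by (intro sum.cong) (simp_all add: T_eq_diff_K)
  then show ?thesis by (simp add: inner_w_diff_right)
qed

lemma inner_w_T_self_nonneg: "inner_w x (T x) \<ge> 0"
  using inner_w_K_self_le[of x] by (simp add: inner_w_T)

lemma inner_w_T_self_le: "inner_w x (T x) \<le> inner_w x x"
  using inner_w_K_self[of x] by (simp add: inner_w_T sum_nonneg)

lemma T_self_adjoint: "inner_w (T x) y = inner_w x (T y)"
proof -
  have "inner_w (T x) y = inner_w y x - inner_w (K x) y"
    by (simp add: inner_w_commute[of "T x"] inner_w_T inner_w_commute[of y "K x"])
  then show ?thesis by (simp add: K_self_adjoint inner_w_commute[of y x] inner_w_T)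
qed

lemma inner_w_T_funpow: "inner_w ((T ^^ a) x) ((T ^^ c) y) = inner_w x ((T ^^ (a + c)) y)"
proof (induction a arbitrary: x)
  case (Suc a)
  have "inner_w ((T ^^ Suc a) x) ((T ^^ c) y) = inner_w ((T ^^ a) (T x)) ((T ^^ c) y)"
    by (simp only: funpow_Suc_right o_apply)
  also have "\<dots> = inner_w x ((T ^^ (Suc a + c)) y)"
    by (simp add: Suc.IH T_self_adjoint)
  finally show ?case .
qed simp

text \<open>Apply \<open>0 \<le> T\<close> to \<open>z - T z\<close> and \<open>T \<le> I\<close> to \<open>T z\<close>.\<close>

lemma inner_w_T_T_le: "inner_w (T z) (T z) \<le> inner_w z (T z)"
proof -
  define w where "w = T z"
  have "0 \<le> inner_w (\<lambda>r. z r - w r) (T (\<lambda>r. z r - w r))"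
    by (rule inner_w_T_self_nonneg)
  also have "\<dots> = inner_w z w - inner_w z (T w) - inner_w w w + inner_w w (T w)"
    unfolding kernel_apply_diff w_def by (simp add: inner_w_diff_left inner_w_diff_right)
  also have "inner_w z (T w) = inner_w w w"
    unfolding w_def T_self_adjoint ..
  finally show ?thesis
    using inner_w_T_self_le[of w] unfolding w_def by simp
qed

lemma moments_nonneg: "0 \<le> inner_w e ((T ^^ j) e)"
proof (cases "even j")
  case True
  then obtain k where "j = 2 * k" by (rule evenE)
  then show ?thesis
    using inner_w_T_funpow[of k e k e] inner_w_self_nonneg[of "(T ^^ k) e"] by (simp add: mult_2)
next
  case False
  then obtain k where "j = 2 * k + 1" by (rule oddE)
  then show ?thesis
    using inner_w_T_funpow[of k e "Suc k" e] inner_w_T_self_nonneg[of "(T ^^ k) e"]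
    by (simp add: mult_2)
qed

lemma moments_decreasing: "decseq (\<lambda>j. inner_w e ((T ^^ j) e))"
  unfolding decseq_Suc_iff
proof
  fix j
  show "inner_w e ((T ^^ Suc j) e) \<le> inner_w e ((T ^^ j) e)"
  proof (cases "even j")
    case True
    then obtain k where "j = 2 * k" by (rule evenE)
    then show ?thesis
      using inner_w_T_funpow[of k e k e] inner_w_T_funpow[of k e "Suc k" e]
        inner_w_T_self_le[of "(T ^^ k) e"] by (simp add: mult_2)
  next
    case False
    then obtain k where "j = 2 * k + 1" by (rule oddE)
    then show ?thesis
      using inner_w_T_funpow[of "Suc k" e "Suc k" e] inner_w_T_funpow[of k e "Suc k" e]
        inner_w_T_T_le[of "(T ^^ k) e"] by (simp add: mult_2)
  qed
qed

lemma T_funpow_convergent: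
  assumes "i \<le> n" shows "convergent (\<lambda>k. (T ^^ k) e i)"
proof (rule convergent_of_moment_bound[where c = "\<lambda>j. inner_w e ((T ^^ j) e)"])
  have "\<forall>j. 0 \<le> inner_w e ((T ^^ j) e)" using moments_nonneg by blast
  then obtain L where "(\<lambda>j. inner_w e ((T ^^ j) e)) \<longlonglongrightarrow> L"
    by (rule decseq_convergent[OF moments_decreasing])
  then show "convergent (\<lambda>j. inner_w e ((T ^^ j) e))" by (auto simp: convergent_def)
  show "col_sum i > 0" using assms by (rule col_sum_gt_0)
next
  fix k l
  define d where "d = (\<lambda>r. (T ^^ k) e r - (T ^^ l) e r)"
  have "col_sum i * ((T ^^ k) e i - (T ^^ l) e i)^2 \<le> inner_w d d"
    using col_sum_mult_sq_le_inner_w[OF assms, of d] by (simp only: d_def)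
  also have "\<dots> = inner_w ((T ^^ k) e) ((T ^^ k) e) - 2 * inner_w ((T ^^ k) e) ((T ^^ l) e)
      + inner_w ((T ^^ l) e) ((T ^^ l) e)"
    unfolding d_def inner_w_diff_left inner_w_diff_right
      inner_w_commute[of "(T ^^ l) e" "(T ^^ k) e"] by simp
  also have "\<dots> = inner_w e ((T ^^ (k + k)) e) - 2 * inner_w e ((T ^^ (k + l)) e)
      + inner_w e ((T ^^ (l + l)) e)"
    by (simp only: inner_w_T_funpow)
  finally show "col_sum i * ((T ^^ k) e i - (T ^^ l) e i)^2 \<le> \<dots>" .
qed

lemma K_eq_0_imp_colloc_eq_0:
  assumes "K x = (\<lambda>r. 0)" and "j \<le> m" shows "colloc x j = 0"
proof -
  have "(\<Sum>j\<le>m. (colloc x j)^2) = 0"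
    using inner_w_K_self[of x] assms(1) by (simp add: inner_w_zero_right)
  then have "\<forall>j\<in>{..m}. (colloc x j)^2 = 0"
    by (subst (asm) sum_nonneg_eq_0_iff) auto
  then show ?thesis using assms(2) by simp
qed

lemma K_K_eq_0_imp: 
  assumes "K (K x) = (\<lambda>r. 0)" shows "K x = (\<lambda>r. 0)"
proof
  fix r
  have "inner_w (K x) (K x) = inner_w x (K (K x))" by (rule K_self_adjoint)
  also have "\<dots> = 0" using assms by (simp add: inner_w_zero_right)
  finally have "inner_w (K x) (K x) = 0" .
  then show "K x r = 0"
    using inner_w_self_eq_0 K_eq_0_outside by (cases "r \<le> n") auto
qed

lemma K_funpow_eq_0_imp: "(K ^^ a) x = (\<lambda>r. 0) \<Longrightarrow> K x = (\<lambda>r. 0)"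
proof (induction a arbitrary: x)
  case 0
  then show ?case by (simp add: kernel_apply_def)
next
  case (Suc a)
  have "(K ^^ a) (K x) = (\<lambda>r. 0)"
    using Suc.prems by (simp only: funpow_Suc_right o_apply)
  then show ?case by (rule K_K_eq_0_imp[OF Suc.IH])
qed

lemma inner_w_normal_rhs: "inner_w (normal_rhs q) x = (\<Sum>j\<le>m. q j * colloc x j)"
proof -
  have "inner_w (normal_rhs q) x = (\<Sum>i\<le>n. \<Sum>j\<le>m. b j i * q j * x i)"
    unfolding inner_w_def normal_rhs_def
    by (intro sum.cong refl) (auto simp: sum_distrib_right dest: col_sum_gt_0)
  also have "\<dots> = (\<Sum>j\<le>m. q j * colloc x j)"
    unfolding colloc_def by (subst sum.swap) (simp add: sum_distrib_left mult_ac)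
  finally show ?thesis .
qed

text \<open>For a Krylov annihilator \<open>K\<^sup>a y = 0\<close> with \<open>y = c g + K w\<close>, self-adjointness
  gives \<open>K y = 0\<close>, hence \<open>A y = 0\<close>; so \<open>y\<close> is orthogonal to \<open>g = \<Lambda> A\<^sup>T q\<close> and to the
  range of \<open>K\<close>, i.e. \<open>y = 0\<close> and \<open>g = K (- w / c)\<close>.\<close>

lemma normal_rhs_in_range: "\<exists>x. K x = normal_rhs q"
proof -
  obtain c a w where "c \<noteq> 0" and annihilated: "(K ^^ a) (\<lambda>r. c * normal_rhs q r + K w r) = (\<lambda>r. 0)"
    using krylov_annihilator[of n normal_kernel "normal_rhs q"]
    by (auto simp: normal_kernel_def normal_rhs_def)
  define y where "y = (\<lambda>r. c * normal_rhs q r + K w r)"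
  have Ky: "K y = (\<lambda>r. 0)"
    using K_funpow_eq_0_imp annihilated unfolding y_def by blast
  have "inner_w y z = c * inner_w (normal_rhs q) z + inner_w (K w) z" for z
    unfolding y_def by (simp add: inner_w_add_left inner_w_scale_left)
  also have "inner_w (normal_rhs q) y = 0"
    using K_eq_0_imp_colloc_eq_0[OF Ky] by (simp add: inner_w_normal_rhs)
  also have "inner_w (K w) y = 0"
    by (simp add: K_self_adjoint Ky inner_w_zero_right)
  finally have "inner_w y y = 0" by simp
  define x where "x = (\<lambda>r. (- 1 / c) * w r)"
  have "K x = normal_rhs q"
  proof
    fix r
    show "K x r = normal_rhs q r"
    proof (cases "r \<le> n")
      case True
      then have "c * normal_rhs q r + K w r = 0"
        using inner_w_self_eq_0[OF \<open>inner_w y y = 0\<close>] unfolding y_def by simp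
      moreover have "K x r = (- 1 / c) * K w r"
        unfolding x_def by (simp only: kernel_apply_scale)
      moreover have "K w r = - (c * normal_rhs q r)" using \<open>c * normal_rhs q r + K w r = 0\<close> by linarith
      ultimately show ?thesis using \<open>c \<noteq> 0\<close> by simp
    qed (simp add: K_eq_0_outside normal_rhs_def)
  qed
  then show ?thesis by blast
qed

lemma iterates_convergent:
  assumes step: "\<And>k i. i \<le> n \<Longrightarrow> p (Suc k) i = T (p k) i + normal_rhs q i"
    and "i \<le> n"
  shows "convergent (\<lambda>k. p k i)"
proof -
  obtain x where x: "K x = normal_rhs q" using normal_rhs_in_range by blast
  define e where "e = (\<lambda>r. p 0 r - x r)"
  have "p k i = (T ^^ k) e i + x i" if "i \<le> n" for k i
    using that
  proof (induction k arbitrary: i)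
    case (Suc k)
    have "T (p k) = T (\<lambda>r. (T ^^ k) e r + x r)"
      using Suc.IH by (intro kernel_apply_cong) simp
    then show ?case
      using step[OF Suc.prems] T_eq_diff_K[OF Suc.prems, of x] x by (simp add: kernel_apply_add)
  qed (simp add: e_def)
  then have "(\<lambda>k. p k i) = (\<lambda>k. (T ^^ k) e i + x i)" using \<open>i \<le> n\<close> by auto
  then show ?thesis
    using convergent_add[OF T_funpow_convergent[OF \<open>i \<le> n\<close>] convergent_const] by simp
qed

definition colloc_mat :: "real mat" where
  "colloc_mat = mat (m + 1) (n + 1) (\<lambda>(j, i). b j i)"

definition weight_mat :: "real mat" where
  "weight_mat = mat_diag (n + 1) (\<lambda>i. 1 / col_sum i)"

lemma colloc_mat_carrier: "colloc_mat \<in> carrier_mat (m + 1) (n + 1)"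
  by (simp add: colloc_mat_def)

lemma weight_mat_mult_transpose:
  "weight_mat * transpose_mat colloc_mat = mat (n + 1) (m + 1) (\<lambda>(i, j). b j i / col_sum i)"
  unfolding weight_mat_def
  by (subst mat_diag_mult_left[of _ _ "m + 1"]) (auto simp: colloc_mat_def intro!: eq_matI)

lemma weight_mat_mult_transpose_carrier:
  "weight_mat * transpose_mat colloc_mat \<in> carrier_mat (n + 1) (m + 1)"
  by (simp add: weight_mat_mult_transpose)

lemma normal_mat_carrier:
  "weight_mat * transpose_mat colloc_mat * colloc_mat \<in> carrier_mat (n + 1) (n + 1)"
  using weight_mat_mult_transpose_carrier colloc_mat_carrier by (rule mult_carrier_mat)

lemma normal_mat_entry:
  assumes "i \<le> n" "l \<le> n"
  shows "(weight_mat * transpose_mat colloc_mat * colloc_mat) $$ (i, l) = normal_kernel i l"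
  using assms unfolding weight_mat_mult_transpose
  by (simp add: colloc_mat_def scalar_prod_def normal_kernel_def atLeast0LessThan
      lessThan_Suc_atMost sum_divide_distrib)

lemma iteration_mat_entry:
  assumes "i \<le> n" "l \<le> n"
  shows "(1\<^sub>m (n + 1) - weight_mat * transpose_mat colloc_mat * colloc_mat) $$ (i, l)
    = iteration_kernel i l"
proof -
  have "(1\<^sub>m (n + 1) - weight_mat * transpose_mat colloc_mat * colloc_mat) $$ (i, l)
      = 1\<^sub>m (n + 1) $$ (i, l) - (weight_mat * transpose_mat colloc_mat * colloc_mat) $$ (i, l)"
    using assms carrier_matD[OF normal_mat_carrier] by (intro index_minus_mat) auto
  also have "(weight_mat * transpose_mat colloc_mat * colloc_mat) $$ (i, l) = normal_kernel i l"
    by (rule normal_mat_entry[OF assms])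
  finally show ?thesis using assms by (simp add: iteration_kernel_def)
qed

lemma iteration_step_entry:
  assumes Q: "Q \<in> carrier_mat (m + 1) d" and M: "M \<in> carrier_mat (n + 1) d"
    and "i \<le> n" "c < d"
  shows "((1\<^sub>m (n + 1) - weight_mat * transpose_mat colloc_mat * colloc_mat) * M
      + weight_mat * transpose_mat colloc_mat * Q) $$ (i, c)
    = T (\<lambda>l. M $$ (l, c)) i + normal_rhs (\<lambda>j. Q $$ (j, c)) i"
proof -
  define I_N where "I_N = 1\<^sub>m (n + 1) - weight_mat * transpose_mat colloc_mat * colloc_mat"
  have I_N: "I_N \<in> carrier_mat (n + 1) (n + 1)"
    unfolding I_N_def by (rule minus_carrier_mat[OF normal_mat_carrier])
  have Y: "weight_mat * transpose_mat colloc_mat * Q \<in> carrier_mat (n + 1) d"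
    using weight_mat_mult_transpose_carrier Q by (rule mult_carrier_mat)
  have "(I_N * M + weight_mat * transpose_mat colloc_mat * Q) $$ (i, c)
      = (I_N * M) $$ (i, c) + (weight_mat * transpose_mat colloc_mat * Q) $$ (i, c)"
    using assms carrier_matD[OF Y] by simp
  also have "(I_N * M) $$ (i, c) = (\<Sum>l<n + 1. I_N $$ (i, l) * M $$ (l, c))"
    using assms I_N by (simp add: scalar_prod_def atLeast0LessThan)
  also have "\<dots> = (\<Sum>l\<le>n. iteration_kernel i l * M $$ (l, c))"
  proof (rule sum.cong)
    fix l assume "l \<in> {..n}"
    then show "I_N $$ (i, l) * M $$ (l, c) = iteration_kernel i l * M $$ (l, c)"
      using iteration_mat_entry[OF \<open>i \<le> n\<close>, of l] unfolding I_N_def by simp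
  qed auto
  also have "\<dots> = T (\<lambda>l. M $$ (l, c)) i"
    by (simp add: kernel_apply_def)
  also have "(weight_mat * transpose_mat colloc_mat * Q) $$ (i, c) = normal_rhs (\<lambda>j. Q $$ (j, c)) i"
    using assms unfolding weight_mat_mult_transpose
    by (simp add: scalar_prod_def normal_rhs_def atLeast0LessThan lessThan_Suc_atMost
        sum_divide_distrib)
  finally show ?thesis unfolding I_N_def .
qed

lemma matrix_iteration_convergent:
  assumes Q: "Q \<in> carrier_mat (m + 1) d" and P0: "P 0 \<in> carrier_mat (n + 1) d"
    and step: "\<And>k. P (Suc k) = (1\<^sub>m (n + 1) - weight_mat * transpose_mat colloc_mat * colloc_mat) * P k
      + weight_mat * transpose_mat colloc_mat * Q"
  shows "mat_seq_convergent (n + 1) d P"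
proof -
  have P: "P k \<in> carrier_mat (n + 1) d" for k
  proof (cases k)
    case (Suc k')
    show ?thesis unfolding Suc step
      by (rule add_carrier_mat[OF mult_carrier_mat[OF weight_mat_mult_transpose_carrier Q]])
  qed (use P0 in simp)
  have step_entry: "P (Suc k) $$ (i, c) = T (\<lambda>l. P k $$ (l, c)) i + normal_rhs (\<lambda>j. Q $$ (j, c)) i"
    if "i \<le> n" "c < d" for k i c
    unfolding step using iteration_step_entry[OF Q P that] .
  show ?thesis
  proof (rule mat_seq_convergentI)
    fix i c assume "i < n + 1" "c < d"
    then show "convergent (\<lambda>k. P k $$ (i, c))"
      by (intro iterates_convergent[where p = "\<lambda>k l. P k $$ (l, c)" and q = "\<lambda>j. Q $$ (j, c)"])
        (simp_all add: step_entry)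
  qed
qed

end

theorem theorem1:
  fixes B :: "nat \<Rightarrow> 'p \<Rightarrow> real" and t :: "nat \<Rightarrow> 'p"
    and n m d :: nat and Q P0 :: "real mat" and P :: "nat \<Rightarrow> real mat"
  defines "A \<equiv> mat (m+1) (n+1) (\<lambda>(j, i). B i (t j))"
  defines "\<Lambda> \<equiv> mat_diag (n+1) (\<lambda>i. 1 / (\<Sum>j\<le>m. B i (t j)))"
  assumes "n \<le> m"
    and "\<And>i x. i \<le> n \<Longrightarrow> B i x \<ge> 0"
    and "\<And>x. (\<Sum>i\<le>n. B i x) = 1"
    and "\<And>i. i \<le> n \<Longrightarrow> \<exists>j\<le>m. B i (t j) \<noteq> 0"
    and "det (transpose_mat A * A) = 0"
    and "d \<ge> 1"
    and "Q \<in> carrier_mat (m+1) d"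
    and "P0 \<in> carrier_mat (n+1) d"
    and "P 0 = P0"
    and "\<And>k. P (Suc k) = (1\<^sub>m (n+1) - \<Lambda> * transpose_mat A * A) * P k + \<Lambda> * transpose_mat A * Q"
  shows "mat_seq_convergent (n+1) d P"
proof -
  have "(\<Sum>j\<le>m. B i (t j)) > 0" if "i \<le> n" for i
  proof -
    obtain j where "j \<le> m" "B i (t j) \<noteq> 0" using assms(6) \<open>i \<le> n\<close> by blast
    then show ?thesis
      using assms(4)[OF \<open>i \<le> n\<close>] by (intro sum_pos2[of _ j]) (auto simp: order_less_le)
  qed
  then interpret lspia n m "\<lambda>j i. B i (t j)"
    using assms(4,5) by unfold_locales auto
  have "A = colloc_mat" "\<Lambda> = weight_mat"
    unfolding A_def \<Lambda>_def colloc_mat_def weight_mat_def col_sum_def by simp_all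
  then show ?thesis
    using matrix_iteration_convergent assms(9-12) by simp
qed

end
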